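(* For all positive integers $k,n$, we have $T_L(n)\ge 3^k$ if and only if $b'_3(k,2)\le n$.
   Context: $T_L(n)$ is the maximum size of a linear trifferent code of length $n$, i.e. a linear subspace $C\subseteq\mathbb{F}_3^n$ such that for any three distinct $x,y,z\in C$ there is a coordinate $i$ with $\{x_i,y_i,z_i\}=\mathbb{F}_3$. A $2$-blocking set in $\mathbb{F}_q^k$ is a set of points meeting every affine subspace (translate of a vector subspace) of dimension $k-2$. $b'_q(k,2)$ is the minimum size of a set $B\subseteq\mathbb{F}_q^k$ such that $\bigcup_{\zeta\in\mathbb{F}_q}\zeta B$ is a $2$-blocking set in $\mathbb{F}_q^k$; for $q=3$ this is the minimum $|B|$ such that $\{\vec0\}\cup B\cup -B$ is a $2$-blocking set. *)

theory Defs
  imports Main "HOL-Library.FuncSet"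
begin

text \<open>The field F_3 is represented by the integers 0, 1, 2 with arithmetic mod 3.
  Vectors of F_3^n are extensional functions on {..<n} (undefined outside).\<close>

definition F3 :: "int set" where
  "F3 = {0, 1, 2}"

definition vecs :: "nat \<Rightarrow> (nat \<Rightarrow> int) set" where
  "vecs n = PiE {..<n} (\<lambda>_. F3)"

definition vzero :: "nat \<Rightarrow> nat \<Rightarrow> int" where
  "vzero n = restrict (\<lambda>_. 0) {..<n}"

definition vadd :: "nat \<Rightarrow> (nat \<Rightarrow> int) \<Rightarrow> (nat \<Rightarrow> int) \<Rightarrow> nat \<Rightarrow> int" where
  "vadd n x y = restrict (\<lambda>i. (x i + y i) mod 3) {..<n}"

definition smul :: "nat \<Rightarrow> int \<Rightarrow> (nat \<Rightarrow> int) \<Rightarrow> nat \<Rightarrow> int" where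
  "smul n c x = restrict (\<lambda>i. (c * x i) mod 3) {..<n}"

definition lin_subspace :: "nat \<Rightarrow> (nat \<Rightarrow> int) set \<Rightarrow> bool" where
  "lin_subspace n C \<longleftrightarrow> C \<subseteq> vecs n \<and> vzero n \<in> C \<and>
     (\<forall>x\<in>C. \<forall>y\<in>C. vadd n x y \<in> C) \<and> (\<forall>c\<in>F3. \<forall>x\<in>C. smul n c x \<in> C)"

definition trifferent :: "nat \<Rightarrow> (nat \<Rightarrow> int) set \<Rightarrow> bool" where
  "trifferent n C \<longleftrightarrow> (\<forall>x\<in>C. \<forall>y\<in>C. \<forall>z\<in>C. x \<noteq> y \<and> y \<noteq> z \<and> x \<noteq> z \<longrightarrow>
       (\<exists>i<n. {x i, y i, z i} = F3))"

definition T_L :: "nat \<Rightarrow> nat" where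
  "T_L n = Max {card C | C. lin_subspace n C \<and> trifferent n C}"

fun lincomb :: "nat \<Rightarrow> nat \<Rightarrow> (nat \<Rightarrow> int) \<Rightarrow> (nat \<Rightarrow> nat \<Rightarrow> int) \<Rightarrow> nat \<Rightarrow> int" where
  "lincomb n 0 c v = vzero n"
| "lincomb n (Suc d) c v = vadd n (lincomb n d c v) (smul n (c d) (v d))"

definition lin_indep :: "nat \<Rightarrow> nat \<Rightarrow> (nat \<Rightarrow> nat \<Rightarrow> int) \<Rightarrow> bool" where
  "lin_indep n d v \<longleftrightarrow> (\<forall>c\<in>PiE {..<d} (\<lambda>_. F3). lincomb n d c v = vzero n \<longrightarrow> (\<forall>j<d. c j = 0))"

definition affine_sub :: "nat \<Rightarrow> nat \<Rightarrow> (nat \<Rightarrow> int) set \<Rightarrow> bool" where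
  "affine_sub n d A \<longleftrightarrow> (\<exists>p\<in>vecs n. \<exists>v. (\<forall>j<d. v j \<in> vecs n) \<and> lin_indep n d v \<and>
      A = {vadd n p (lincomb n d c v) | c. c \<in> PiE {..<d} (\<lambda>_. F3)})"

text \<open>2-blocking set in F_3^k: meets every affine subspace of dimension k-2
  (for k < 2 there are no such subspaces, so the condition is vacuous).\<close>
definition blocking2 :: "nat \<Rightarrow> (nat \<Rightarrow> int) set \<Rightarrow> bool" where
  "blocking2 k S \<longleftrightarrow> S \<subseteq> vecs k \<and>
     (2 \<le> k \<longrightarrow> (\<forall>A. affine_sub k (k - 2) A \<longrightarrow> S \<inter> A \<noteq> {}))"

definition b3' :: "nat \<Rightarrow> nat" where
  "b3' k = Min {card B | B. B \<subseteq> vecs k \<and> blocking2 k (\<Union>\<zeta>\<in>F3. smul k \<zeta> ` B)}"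

end

theory Submission
  imports Defs
begin

text \<open>
  A linear code of dimension k and length n is the image of x \<mapsto> (x \<cdot> g_1, ..., x \<cdot> g_n)
  for columns g_i \<in> F_3^k, and it is trifferent iff any three distinct messages x, y, z are
  separated by some column. Moving x to 0, the column g separates 0, u = y - x, w = z - x iff
  (u \<cdot> g, w \<cdot> g) is (1, 2) or (2, 1), i.e. iff g or -g lies in the codimension-2 affine
  subspace {v. u \<cdot> v = 1, w \<cdot> v = 2} (when u, w are dependent, w = -u and one uses a
  subspace {u \<cdot> v = 1, e \<cdot> v = 0} instead). The affine subspaces of codimension 2 are exactly
  the level sets {u \<cdot> v = a, w \<cdot> v = b} of independent pairs u, w, and for (a, b) \<noteq> (0, 0) a
  suitable choice of three points in the plane spanned by u and w shows that a separating column
  hits the level set up to sign; the level set (0, 0) contains 0. So the columns give a trifferent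
  code iff {0} \<union> B \<union> -B is 2-blocking for the set B of columns.
\<close>

section \<open>Vectors over F_3\<close>

definition vdiff :: "nat \<Rightarrow> (nat \<Rightarrow> int) \<Rightarrow> (nat \<Rightarrow> int) \<Rightarrow> nat \<Rightarrow> int" where
  "vdiff n x y = restrict (\<lambda>i. (x i - y i) mod 3) {..<n}"

definition comb2 :: "nat \<Rightarrow> int \<Rightarrow> (nat \<Rightarrow> int) \<Rightarrow> int \<Rightarrow> (nat \<Rightarrow> int) \<Rightarrow> nat \<Rightarrow> int" where
  "comb2 n l x m y = restrict (\<lambda>i. (l * x i + m * y i) mod 3) {..<n}"

definition dot :: "nat \<Rightarrow> (nat \<Rightarrow> int) \<Rightarrow> (nat \<Rightarrow> int) \<Rightarrow> int" where
  "dot n x y = (\<Sum>j<n. x j * y j) mod 3"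

lemma F3_iff: "x \<in> F3 \<longleftrightarrow> 0 \<le> x \<and> x < 3"
  unfolding F3_def by auto

lemma F3_cases: "x \<in> F3 \<Longrightarrow> x = 0 \<or> x = 1 \<or> x = 2"
  unfolding F3_def by auto

lemma mod_3_in_F3 [simp]: "(x::int) mod 3 \<in> F3"
  unfolding F3_iff by simp

lemma F3_mod_3 [simp]: "x \<in> F3 \<Longrightarrow> x mod 3 = x"
  unfolding F3_iff by simp

lemma finite_F3 [simp]: "finite F3" and card_F3 [simp]: "card F3 = 3"
  unfolding F3_def by auto

lemma F3_eq_insert_iff:
  assumes "a \<in> F3" "b \<in> F3" "c \<in> F3"
  shows "{a, b, c} = F3 \<longleftrightarrow> a \<noteq> b \<and> b \<noteq> c \<and> a \<noteq> c"
proof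
  assume "{a, b, c} = F3"
  then have "card {a, b, c} = 3" by simp
  then show "a \<noteq> b \<and> b \<noteq> c \<and> a \<noteq> c" by (auto simp: card_insert_if split: if_splits)
qed (use assms F3_cases in \<open>auto simp: F3_def\<close>)

lemma F3_elements: "(0::int) \<in> F3" "(1::int) \<in> F3" "(2::int) \<in> F3"
  unfolding F3_def by simp_all

lemma F3_diff_mod_3_eq_0_iff: "a \<in> F3 \<Longrightarrow> b \<in> F3 \<Longrightarrow> (a - b) mod 3 = 0 \<longleftrightarrow> a = b"
  unfolding F3_def by auto

lemma vecs_component: "x \<in> vecs n \<Longrightarrow> i < n \<Longrightarrow> x i \<in> F3"
  unfolding vecs_def by auto

lemma vecs_component_mod_3: "x \<in> vecs n \<Longrightarrow> i < n \<Longrightarrow> x i mod 3 = x i"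
  by (simp add: vecs_component)

lemma vecs_eqI: "(\<And>i. i < n \<Longrightarrow> x i = y i) \<Longrightarrow> x \<in> vecs n \<Longrightarrow> y \<in> vecs n \<Longrightarrow> x = y"
  unfolding vecs_def by (rule PiE_ext) auto

lemma vecs_eq_modI:
  "(\<And>i. i < n \<Longrightarrow> x i mod 3 = y i mod 3) \<Longrightarrow> x \<in> vecs n \<Longrightarrow> y \<in> vecs n \<Longrightarrow> x = y"
  by (rule vecs_eqI) (simp_all add: vecs_component_mod_3)

lemma restrict_in_vecs: "(\<And>i. i < n \<Longrightarrow> f i \<in> F3) \<Longrightarrow> restrict f {..<n} \<in> vecs n"
  unfolding vecs_def by simp

lemma restrict_mod_3_in_vecs [simp]: "restrict (\<lambda>i. f i mod 3) {..<n} \<in> vecs n"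
  unfolding vecs_def by auto

lemma finite_vecs [simp]: "finite (vecs n)"
  unfolding vecs_def by (simp add: finite_PiE)

lemma card_vecs [simp]: "card (vecs n) = 3 ^ n"
  unfolding vecs_def by (simp add: card_PiE)

lemma vzero_in_vecs [simp]: "vzero n \<in> vecs n"
  unfolding vzero_def vecs_def F3_def by auto

lemma vadd_in_vecs [simp]: "vadd n x y \<in> vecs n"
  unfolding vadd_def by simp

lemma smul_in_vecs [simp]: "smul n c x \<in> vecs n"
  unfolding smul_def by simp

lemma vdiff_in_vecs [simp]: "vdiff n x y \<in> vecs n"
  unfolding vdiff_def by simp

lemma comb2_in_vecs [simp]: "comb2 n l x m y \<in> vecs n"
  unfolding comb2_def by simp

lemma comb2_eq_vzero: "comb2 n 0 x 0 y = vzero n"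
  unfolding comb2_def vzero_def by simp

lemma vzero_apply [simp]: "i < n \<Longrightarrow> vzero n i = 0"
  unfolding vzero_def by simp

lemma vadd_apply [simp]: "i < n \<Longrightarrow> vadd n x y i = (x i + y i) mod 3"
  unfolding vadd_def by simp

lemma smul_apply [simp]: "i < n \<Longrightarrow> smul n c x i = (c * x i) mod 3"
  unfolding smul_def by simp

lemma vdiff_apply [simp]: "i < n \<Longrightarrow> vdiff n x y i = (x i - y i) mod 3"
  unfolding vdiff_def by simp

lemma vadd_vdiff: "x \<in> vecs n \<Longrightarrow> vadd n y (vdiff n x y) = x"
  by (rule vecs_eq_modI) (simp_all add: mod_simps)

lemma vdiff_vadd: "x \<in> vecs n \<Longrightarrow> vdiff n (vadd n y x) y = x"
  by (rule vecs_eq_modI) (simp_all add: mod_simps)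

lemma vadd_left_cancel: "x \<in> vecs n \<Longrightarrow> y \<in> vecs n \<Longrightarrow> vadd n p x = vadd n p y \<longleftrightarrow> x = y"
  using vdiff_vadd by metis

lemma vdiff_right_cancel: "x \<in> vecs n \<Longrightarrow> y \<in> vecs n \<Longrightarrow> vdiff n x p = vdiff n y p \<longleftrightarrow> x = y"
  using vadd_vdiff by metis

lemma inj_on_vadd: "K \<subseteq> vecs n \<Longrightarrow> inj_on (vadd n p) K"
  by (rule inj_onI) (use vadd_left_cancel in blast)

lemma vadd_vzero: "x \<in> vecs n \<Longrightarrow> vadd n x (vzero n) = x"
  by (rule vecs_eq_modI) simp_all

lemma vdiff_self: "vdiff n x x = vzero n"
  unfolding vdiff_def vzero_def by simp

lemma vdiff_eq_vzero_iff: "x \<in> vecs n \<Longrightarrow> y \<in> vecs n \<Longrightarrow> vdiff n x y = vzero n \<longleftrightarrow> x = y"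
  by (metis vadd_vdiff vadd_vzero vdiff_self)

lemma smul_0: "smul n 0 x = vzero n"
  unfolding smul_def vzero_def by simp

lemma smul_1: "x \<in> vecs n \<Longrightarrow> smul n 1 x = x"
  by (rule vecs_eq_modI) simp_all

lemma lincomb_eq: "lincomb n d c v = restrict (\<lambda>i. (\<Sum>j<d. c j * v j i) mod 3) {..<n}"
proof (induction d)
  case 0
  show ?case by (simp add: vzero_def)
next
  case (Suc d)
  show ?case
  proof
    fix i
    show "lincomb n (Suc d) c v i = restrict (\<lambda>i. (\<Sum>j<Suc d. c j * v j i) mod 3) {..<n} i"
      by (cases "i < n") (simp_all add: Suc vadd_def smul_def mod_add_eq)
  qed
qed

lemma lincomb_in_vecs [simp]: "lincomb n d c v \<in> vecs n"
  unfolding lincomb_eq by simp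

lemma dot_in_F3 [simp]: "dot n x y \<in> F3"
  unfolding dot_def by simp

lemma dot_commute: "dot n x y = dot n y x"
  unfolding dot_def by (simp add: mult.commute)

lemma sum_mod_3_cong:
  "(\<And>j. j \<in> A \<Longrightarrow> f j mod 3 = g j mod 3) \<Longrightarrow> sum f A mod 3 = sum g A mod (3::int)"
  by (metis (mono_tags) mod_sum_eq sum.cong)

lemma mod_3_lin_comb_cong: "(l * (a mod 3) + m * (b mod 3)) mod 3 = (l * a + m * b) mod (3::int)"
proof -
  have "(l * (a mod 3) + m * (b mod 3)) mod 3 = ((l * (a mod 3)) mod 3 + (m * (b mod 3)) mod 3) mod 3"
    by (rule mod_add_eq[symmetric])
  also have "\<dots> = (l * a + m * b) mod 3"
    by (simp only: mod_mult_right_eq mod_add_eq)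
  finally show ?thesis .
qed

lemma mod_3_solve_linear:
  assumes "c \<in> F3" "c \<noteq> 0" "(s + c * x) mod 3 = 0"
  shows "x mod 3 = (2 * c * s) mod (3::int)"
  using F3_cases[OF assms(1)] assms(2,3) by (elim disjE) (simp_all, presburger+)

lemma mult_square_mod_3:
  assumes "(d::int) mod 3 \<noteq> 0"
  shows "(c * (d * d)) mod 3 = c mod 3"
proof -
  have "d mod 3 = 1 \<or> d mod 3 = 2"
    using assms by presburger
  moreover have "(d * d) mod 3 = ((d mod 3) * (d mod 3)) mod 3"
    by (simp add: mod_mult_eq)
  ultimately have "(d * d) mod 3 = 1"
    by auto
  have "(c * (d * d)) mod 3 = (c * ((d * d) mod 3)) mod 3"
    by (rule mod_mult_right_eq[symmetric])
  then show ?thesis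
    using \<open>(d * d) mod 3 = 1\<close> by simp
qed

lemma dot_comb2_left: "dot n (comb2 n l x m y) g = (l * dot n x g + m * dot n y g) mod 3"
proof -
  have "dot n (comb2 n l x m y) g = (\<Sum>i<n. l * (x i * g i) + m * (y i * g i)) mod 3"
    unfolding dot_def comb2_def
    by (rule sum_mod_3_cong) (simp add: mod_mult_left_eq distrib_right mult.assoc)
  also have "\<dots> = (l * (\<Sum>i<n. x i * g i) + m * (\<Sum>i<n. y i * g i)) mod 3"
    by (simp add: sum.distrib sum_distrib_left)
  also have "\<dots> = (l * dot n x g + m * dot n y g) mod 3"
    unfolding dot_def by (rule mod_3_lin_comb_cong[symmetric])
  finally show ?thesis .
qed

lemma dot_vadd_left: "dot n (vadd n x y) g = (dot n x g + dot n y g) mod 3"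
  using dot_comb2_left[of n 1 x 1 y g] by (simp add: comb2_def vadd_def)

lemma dot_smul_left: "dot n (smul n c x) g = (c * dot n x g) mod 3"
  using dot_comb2_left[of n c x 0 x g] by (simp add: comb2_def smul_def)

lemma dot_vdiff_left: "dot n (vdiff n x y) g = (dot n x g - dot n y g) mod 3"
proof -
  have "vdiff n x y = comb2 n 1 x (-1) y"
    unfolding vdiff_def comb2_def by simp
  then show ?thesis
    using dot_comb2_left[of n 1 x "-1" y g] by simp
qed

lemma dot_vzero_left [simp]: "dot n (vzero n) g = 0"
  unfolding dot_def by simp

lemma dot_vadd_right: "dot n u (vadd n x y) = (dot n u x + dot n u y) mod 3"
  by (simp add: dot_commute[of n u] dot_vadd_left)

lemma dot_smul_right: "dot n u (smul n c x) = (c * dot n u x) mod 3"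
  by (simp add: dot_commute[of n u] dot_smul_left)

lemma dot_vdiff_right: "dot n u (vdiff n x y) = (dot n u x - dot n u y) mod 3"
  by (simp add: dot_commute[of n u] dot_vdiff_left)

lemma dot_vzero_right [simp]: "dot n u (vzero n) = 0"
  by (simp add: dot_commute[of n u])

section \<open>Linear independence and spans\<close>

definition lin_span :: "nat \<Rightarrow> nat \<Rightarrow> (nat \<Rightarrow> nat \<Rightarrow> int) \<Rightarrow> (nat \<Rightarrow> int) set" where
  "lin_span n d v = (\<lambda>c. lincomb n d c v) ` vecs d"

lemma lincomb_apply: "i < n \<Longrightarrow> lincomb n d c v i = (\<Sum>j<d. c j * v j i) mod 3"
  by (simp add: lincomb_eq)

lemma lincomb_eq_vzero_iff:
  "lincomb n d c v = vzero n \<longleftrightarrow> (\<forall>i<n. (\<Sum>j<d. c j * v j i) mod 3 = 0)"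
proof
  assume h: "lincomb n d c v = vzero n"
  show "\<forall>i<n. (\<Sum>j<d. c j * v j i) mod 3 = 0"
  proof (intro allI impI)
    fix i assume "i < n"
    then show "(\<Sum>j<d. c j * v j i) mod 3 = 0"
      using fun_cong[OF h, of i] by (simp add: lincomb_apply)
  qed
next
  assume "\<forall>i<n. (\<Sum>j<d. c j * v j i) mod 3 = 0"
  then show "lincomb n d c v = vzero n"
    by (intro vecs_eqI[OF _ lincomb_in_vecs vzero_in_vecs]) (simp add: lincomb_apply)
qed

lemma lin_indep_iff:
  "lin_indep n d v \<longleftrightarrow> (\<forall>c\<in>vecs d. (\<forall>i<n. (\<Sum>j<d. c j * v j i) mod 3 = 0) \<longrightarrow> (\<forall>j<d. c j = 0))"
  unfolding lin_indep_def lincomb_eq_vzero_iff vecs_def ..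

lemma lin_indep_coeff_mod_3:
  assumes "lin_indep n d v" and "\<forall>i<n. (\<Sum>j<d. l j * v j i) mod 3 = 0" and "j < d"
  shows "l j mod 3 = 0"
proof -
  define c where "c = restrict (\<lambda>j. l j mod 3) {..<d}"
  have "c \<in> vecs d"
    unfolding c_def by simp
  moreover have "(\<Sum>j<d. c j * v j i) mod 3 = 0" if "i < n" for i
  proof -
    have "(\<Sum>j<d. c j * v j i) mod 3 = (\<Sum>j<d. l j * v j i) mod 3"
      unfolding c_def by (rule sum_mod_3_cong) (simp add: mod_mult_left_eq)
    then show ?thesis
      using assms(2) that by simp
  qed
  ultimately have "c j = 0"
    using assms(1,3) unfolding lin_indep_iff by blast
  then show ?thesis
    using assms(3) unfolding c_def by simp
qed

lemma inj_on_lincomb: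
  assumes "lin_indep n d v"
  shows "inj_on (\<lambda>c. lincomb n d c v) (vecs d)"
proof
  fix c c' assume c: "c \<in> vecs d" and c': "c' \<in> vecs d"
    and eq: "lincomb n d c v = lincomb n d c' v"
  have diff: "\<forall>i<n. (\<Sum>j<d. (c j - c' j) * v j i) mod 3 = 0"
  proof (intro allI impI)
    fix i assume "i < n"
    then have "(\<Sum>j<d. c j * v j i) mod 3 = (\<Sum>j<d. c' j * v j i) mod 3"
      using fun_cong[OF eq, of i] by (simp add: lincomb_apply)
    then show "(\<Sum>j<d. (c j - c' j) * v j i) mod 3 = 0"
      by (simp add: left_diff_distrib sum_subtractf mod_eq_dvd_iff)
  qed
  have "(c j - c' j) mod 3 = 0" if "j < d" for j
    using lin_indep_coeff_mod_3[OF assms diff that] .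
  then have "c j mod 3 = c' j mod 3" if "j < d" for j
    using that by (simp only: mod_eq_dvd_iff dvd_eq_mod_eq_0)
  then show "c = c'"
    by (rule vecs_eq_modI[OF _ c c'])
qed

lemma card_lin_span: "lin_indep n d v \<Longrightarrow> card (lin_span n d v) = 3 ^ d"
  unfolding lin_span_def by (simp add: card_image inj_on_lincomb)

lemma lin_span_subset_vecs: "lin_span n d v \<subseteq> vecs n"
  unfolding lin_span_def by auto

lemma subspace_vzero: "lin_subspace n C \<Longrightarrow> vzero n \<in> C"
  and subspace_vadd: "lin_subspace n C \<Longrightarrow> x \<in> C \<Longrightarrow> y \<in> C \<Longrightarrow> vadd n x y \<in> C"
  and subspace_smul: "lin_subspace n C \<Longrightarrow> a \<in> F3 \<Longrightarrow> x \<in> C \<Longrightarrow> smul n a x \<in> C"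
  and subspace_subset_vecs: "lin_subspace n C \<Longrightarrow> C \<subseteq> vecs n"
  unfolding lin_subspace_def by blast+

lemma lincomb_in_subspace:
  assumes C: "lin_subspace n C" and "\<forall>j<d. v j \<in> C" and "\<forall>j<d. c j \<in> F3"
  shows "lincomb n d c v \<in> C"
  using assms(2,3)
proof (induction d)
  case 0
  show ?case using subspace_vzero[OF C] by simp
next
  case (Suc d)
  show ?case
    unfolding lincomb.simps using Suc by (intro subspace_vadd[OF C] subspace_smul[OF C]) simp_all
qed

lemma lin_span_subset_subspace:
  "lin_subspace n C \<Longrightarrow> \<forall>j<d. v j \<in> C \<Longrightarrow> lin_span n d v \<subseteq> C"
  unfolding lin_span_def by (auto intro: lincomb_in_subspace vecs_component)

lemma finite_subspace: "lin_subspace n C \<Longrightarrow> finite C"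
  by (rule finite_subset[OF subspace_subset_vecs finite_vecs])

lemma lin_indep_extend:
  assumes li: "lin_indep n d v" and w: "w \<in> vecs n" and w_notin: "w \<notin> lin_span n d v"
  shows "lin_indep n (Suc d) (v(d := w))"
  unfolding lin_indep_iff
proof (intro ballI impI)
  fix c assume c: "c \<in> vecs (Suc d)"
    and zero: "\<forall>i<n. (\<Sum>j<Suc d. c j * (v(d := w)) j i) mod 3 = 0"
  have rel: "((\<Sum>j<d. c j * v j i) + c d * w i) mod 3 = 0" if "i < n" for i
  proof -
    have "(\<Sum>j<d. c j * (v(d := w)) j i) = (\<Sum>j<d. c j * v j i)"
      by (rule sum.cong) simp_all
    then show ?thesis
      using zero that by simp
  qed
  have "c d = 0"
  proof (rule ccontr)
    assume "c d \<noteq> 0"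
    \<comment> \<open>In F_3 the nonzero scalar c d is its own inverse, so w is a combination of the v j.\<close>
    define c' where "c' = restrict (\<lambda>j. (2 * c d * c j) mod 3) {..<d}"
    have "w = lincomb n d c' v"
    proof (rule vecs_eq_modI[OF _ w lincomb_in_vecs])
      fix i assume i: "i < n"
      have "(\<Sum>j<d. c' j * v j i) mod 3 = (2 * c d * (\<Sum>j<d. c j * v j i)) mod 3"
        unfolding c'_def sum_distrib_left
        by (rule sum_mod_3_cong) (simp add: mod_mult_left_eq mult.assoc)
      moreover have "w i mod 3 = (2 * c d * (\<Sum>j<d. c j * v j i)) mod 3"
        using mod_3_solve_linear[OF vecs_component[OF c, of d] \<open>c d \<noteq> 0\<close> rel[OF i]] by simp
      ultimately show "w i mod 3 = lincomb n d c' v i mod 3"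
        using i by (simp add: lincomb_apply)
    qed
    moreover have "c' \<in> vecs d"
      unfolding c'_def by simp
    ultimately show False
      using w_notin unfolding lin_span_def by blast
  qed
  then have rel_d: "\<forall>i<n. (\<Sum>j<d. c j * v j i) mod 3 = 0"
    using rel by simp
  have "c j = 0" if "j < d" for j
    using lin_indep_coeff_mod_3[OF li rel_d that] vecs_component[OF c, of j] that by simp
  then show "\<forall>j<Suc d. c j = 0"
    using \<open>c d = 0\<close> less_Suc_eq by auto
qed

lemma exists_lin_indep_in_subspace:
  assumes C: "lin_subspace n C"
  shows "3 ^ d \<le> card C \<Longrightarrow> \<exists>v. (\<forall>j<d. v j \<in> C) \<and> lin_indep n d v"
proof (induction d)
  case 0
  then show ?case unfolding lin_indep_def by simp
next
  case (Suc d)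
  then obtain v where vC: "\<forall>j<d. v j \<in> C" and li: "lin_indep n d v"
    by fastforce
  have "3 * 3 ^ d \<le> card C"
    using Suc.prems by simp
  then have "card (lin_span n d v) < card C"
    using card_lin_span[OF li] zero_less_power[of "3::nat" d] by linarith
  then have "\<not> C \<subseteq> lin_span n d v"
    using card_mono[OF finite_subset[OF lin_span_subset_vecs finite_vecs]] by (meson not_le)
  then obtain w where w: "w \<in> C" "w \<notin> lin_span n d v"
    by blast
  have "lin_indep n (Suc d) (v(d := w))"
    using lin_indep_extend[OF li _ w(2)] w(1) subspace_subset_vecs[OF C] by blast
  moreover have "\<forall>j<Suc d. (v(d := w)) j \<in> C"
    using vC w(1) less_Suc_eq by auto
  ultimately show ?case
    by blast
qed

lemma exists_basis:
  assumes C: "lin_subspace n C" and card: "card C = 3 ^ d"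
  obtains v where "\<forall>j<d. v j \<in> vecs n" "lin_indep n d v" "C = lin_span n d v"
proof -
  obtain v where vC: "\<forall>j<d. v j \<in> C" and li: "lin_indep n d v"
    using exists_lin_indep_in_subspace[OF C] card by auto
  have "lin_span n d v \<subseteq> C"
    by (rule lin_span_subset_subspace[OF C vC])
  then have "lin_span n d v = C"
    using card card_lin_span[OF li] finite_subspace[OF C] by (simp add: card_subset_eq)
  then show ?thesis
    using that vC li subspace_subset_vecs[OF C] by blast
qed

lemma level_set_eq_translate:
  assumes K: "K \<subseteq> vecs n"
    and kernel: "\<And>x y. x \<in> vecs n \<Longrightarrow> y \<in> vecs n \<Longrightarrow> f x = f y \<longleftrightarrow> vdiff n x y \<in> K"
    and p: "p \<in> vecs n"
  shows "{x \<in> vecs n. f x = f p} = vadd n p ` K"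
proof
  show "{x \<in> vecs n. f x = f p} \<subseteq> vadd n p ` K"
  proof
    fix x assume "x \<in> {x \<in> vecs n. f x = f p}"
    then have "x \<in> vecs n" "vdiff n x p \<in> K"
      using kernel p by auto
    then show "x \<in> vadd n p ` K"
      using vadd_vdiff[of x n p] by (metis image_eqI)
  qed
next
  show "vadd n p ` K \<subseteq> {x \<in> vecs n. f x = f p}"
  proof
    fix x assume "x \<in> vadd n p ` K"
    then obtain g where g: "g \<in> K" "x = vadd n p g"
      by blast
    then have "vdiff n x p = g"
      using K vdiff_vadd by blast
    then show "x \<in> {x \<in> vecs n. f x = f p}"
      using kernel[of x p] g p by simp
  qed
qed

lemma card_vecs_eq_card_image_mult_card_kernel:
  assumes K: "K \<subseteq> vecs n"
    and kernel: "\<And>x y. x \<in> vecs n \<Longrightarrow> y \<in> vecs n \<Longrightarrow> f x = f y \<longleftrightarrow> vdiff n x y \<in> K"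
  shows "card (vecs n) = card (f ` vecs n) * card K"
proof -
  let ?L = "\<lambda>c. {x \<in> vecs n. f x = c}"
  have card_L: "card (?L c) = card K" if c: "c \<in> f ` vecs n" for c
  proof -
    obtain p where p: "p \<in> vecs n" "c = f p"
      using c by blast
    show ?thesis
      using level_set_eq_translate[OF K kernel p(1)] p(2) inj_on_vadd[OF K] by (simp add: card_image)
  qed
  have "vecs n = (\<Union>c\<in>f ` vecs n. ?L c)"
    by blast
  also have "card \<dots> = (\<Sum>c\<in>f ` vecs n. card (?L c))"
    by (rule card_UN_disjoint) auto
  also have "\<dots> = card (f ` vecs n) * card K"
    using card_L by simp
  finally show ?thesis .
qed

section \<open>Pairs of linear forms\<close>

definition pair_indep :: "nat \<Rightarrow> (nat \<Rightarrow> int) \<Rightarrow> (nat \<Rightarrow> int) \<Rightarrow> bool" where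
  "pair_indep n u w \<longleftrightarrow>
     (\<forall>l m::int. (\<forall>i<n. (l * u i + m * w i) mod 3 = 0) \<longrightarrow> l mod 3 = 0 \<and> m mod 3 = 0)"

definition fibre :: "nat \<Rightarrow> (nat \<Rightarrow> int) \<Rightarrow> (nat \<Rightarrow> int) \<Rightarrow> int \<Rightarrow> int \<Rightarrow> (nat \<Rightarrow> int) set" where
  "fibre n u w a b = {x \<in> vecs n. dot n u x = a \<and> dot n w x = b}"

lemma pair_indep_minor:
  assumes "pair_indep n u w"
  obtains i1 i2 where "i1 < n" "i2 < n" "(u i1 * w i2 - u i2 * w i1) mod 3 \<noteq> 0"
proof -
  have "\<exists>i1<n. u i1 mod 3 \<noteq> 0"
  proof (rule ccontr)
    assume "\<not> ?thesis"
    then have "\<forall>i<n. (1 * u i + 0 * w i) mod 3 = 0"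
      by simp
    then show False
      using assms[unfolded pair_indep_def, rule_format, of 1 0] by simp
  qed
  then obtain i1 where i1: "i1 < n" "u i1 mod 3 \<noteq> 0"
    by blast
  have "\<exists>i2<n. (u i1 * w i2 - u i2 * w i1) mod 3 \<noteq> 0"
  proof (rule ccontr)
    assume none: "\<not> ?thesis"
    have "(w i1 * u i + (- u i1) * w i) mod 3 = 0" if "i < n" for i
    proof -
      have "(u i1 * w i - u i * w i1) mod 3 = 0"
        using none that by blast
      moreover have "w i1 * u i + (- u i1) * w i = - (u i1 * w i - u i * w i1)"
        by (simp add: algebra_simps)
      ultimately show ?thesis
        by presburger
    qed
    then have "(- u i1) mod 3 = 0"
      using assms unfolding pair_indep_def by blast
    then show False
      using i1(2) by presburger
  qed
  then show ?thesis
    using that i1(1) by blast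
qed

lemma comb2_eq_imp_coeffs_eq:
  assumes "pair_indep n u w" "comb2 n l u m w = comb2 n l' u m' w"
  shows "l mod 3 = l' mod 3 \<and> m mod 3 = m' mod 3"
proof -
  have "((l - l') * u i + (m - m') * w i) mod 3 = 0" if "i < n" for i
  proof -
    have "(l * u i + m * w i) mod 3 = (l' * u i + m' * w i) mod 3"
      using fun_cong[OF assms(2), of i] that unfolding comb2_def by simp
    then show ?thesis
      by (simp add: mod_eq_dvd_iff algebra_simps)
  qed
  then have "(l - l') mod 3 = 0 \<and> (m - m') mod 3 = 0"
    using assms(1) unfolding pair_indep_def by blast
  then show ?thesis
    by (simp only: mod_eq_dvd_iff dvd_eq_mod_eq_0)
qed

lemma sum_two_points:
  fixes y :: "nat \<Rightarrow> int"
  assumes "i1 < n" "i2 < n"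
  shows "(\<Sum>i<n. y i * ((if i = i1 then x1 else 0) + (if i = i2 then x2 else 0))) = y i1 * x1 + y i2 * x2"
proof -
  have "(\<Sum>i<n. y i * ((if i = i1 then x1 else 0) + (if i = i2 then x2 else 0)))
      = (\<Sum>i<n. (if i = i1 then y i * x1 else 0) + (if i = i2 then y i * x2 else 0))"
    by (rule sum.cong) (auto simp: distrib_left)
  also have "\<dots> = (\<Sum>i<n. (if i = i1 then y i * x1 else 0)) + (\<Sum>i<n. (if i = i2 then y i * x2 else 0))"
    by (rule sum.distrib)
  also have "\<dots> = y i1 * x1 + y i2 * x2"
    using assms by (simp add: sum.delta)
  finally show ?thesis .
qed

lemma fibre_nonempty:
  assumes "pair_indep n u w" "a \<in> F3" "b \<in> F3"
  shows "fibre n u w a b \<noteq> {}"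
proof -
  obtain i1 i2 where i: "i1 < n" "i2 < n" and minor: "(u i1 * w i2 - u i2 * w i1) mod 3 \<noteq> 0"
    using pair_indep_minor[OF assms(1)] .
  define D where "D = u i1 * w i2 - u i2 * w i1"
  have D: "D mod 3 \<noteq> 0"
    using minor unfolding D_def .
  \<comment> \<open>Cramer's rule on the coordinates i1, i2; D is its own inverse modulo 3.\<close>
  define x1 where "x1 = D * (a * w i2 - b * u i2)"
  define x2 where "x2 = D * (b * u i1 - a * w i1)"
  define x where "x = restrict (\<lambda>i. ((if i = i1 then x1 else 0) + (if i = i2 then x2 else 0)) mod 3) {..<n}"
  have dot_x: "dot n y x = (y i1 * x1 + y i2 * x2) mod 3" for y
  proof -
    have "dot n y x = (\<Sum>i<n. y i * ((if i = i1 then x1 else 0) + (if i = i2 then x2 else 0))) mod 3"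
      unfolding dot_def x_def by (rule sum_mod_3_cong) (simp add: mod_mult_right_eq)
    then show ?thesis
      using sum_two_points[OF i, of y] by simp
  qed
  have "u i1 * x1 + u i2 * x2 = a * (D * D)" "w i1 * x1 + w i2 * x2 = b * (D * D)"
    unfolding x1_def x2_def D_def by (simp_all add: algebra_simps)
  then have "dot n u x = a" and "dot n w x = b"
    using dot_x[of u] dot_x[of w] mult_square_mod_3[OF D] assms(2,3) by simp_all
  then have "x \<in> fibre n u w a b"
    unfolding fibre_def x_def by simp
  then show ?thesis
    by blast
qed

lemma F3_linear_relation:
  assumes "l \<in> F3" "m \<in> F3" "U \<in> F3" "W \<in> F3" "\<not> (l = 0 \<and> m = 0)" "(l * U + m * W) mod 3 = 0"
  shows "(m = 0 \<longrightarrow> U = 0) \<and> (m \<noteq> 0 \<longrightarrow> W = ((2 * l * m) mod 3 * U) mod 3)"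
  using F3_cases[OF assms(1)] F3_cases[OF assms(2)] F3_cases[OF assms(3)] F3_cases[OF assms(4)] assms(5,6)
  by auto

lemma pair_indep_if_not_multiple:
  assumes u: "u \<in> vecs n" "u \<noteq> vzero n" and w: "w \<in> vecs n" "w \<notin> {vzero n, u, smul n 2 u}"
  shows "pair_indep n u w"
proof (rule ccontr)
  assume "\<not> pair_indep n u w"
  then obtain l m where rel: "\<forall>i<n. (l * u i + m * w i) mod 3 = 0"
    and nontrivial: "\<not> (l mod 3 = 0 \<and> m mod 3 = 0)"
    unfolding pair_indep_def by blast
  have rel_mod: "((l mod 3) * u i + (m mod 3) * w i) mod 3 = 0" if "i < n" for i
    using rel mod_3_lin_comb_cong[of "u i" l "w i" m] that by (simp add: mult.commute)
  have comp: "(m mod 3 = 0 \<longrightarrow> u i = 0) \<and>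
      (m mod 3 \<noteq> 0 \<longrightarrow> w i = ((2 * (l mod 3) * (m mod 3)) mod 3 * u i) mod 3)" if "i < n" for i
    by (rule F3_linear_relation[OF mod_3_in_F3 mod_3_in_F3 vecs_component[OF u(1) that]
          vecs_component[OF w(1) that] nontrivial rel_mod[OF that]])
  show False
  proof (cases "m mod 3 = 0")
    case True
    then have "u = vzero n"
      using comp by (intro vecs_eqI[OF _ u(1) vzero_in_vecs]) simp
    then show False
      using u(2) by contradiction
  next
    case False
    define t where "t = (2 * (l mod 3) * (m mod 3)) mod 3"
    have "w = smul n t u"
      using comp False unfolding t_def by (intro vecs_eqI[OF _ w(1) smul_in_vecs]) simp
    moreover have "t = 0 \<or> t = 1 \<or> t = 2"
      unfolding t_def by (rule F3_cases) simp
    ultimately show False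
      using w(2) smul_0 smul_1[OF u(1)] by auto
  qed
qed

lemma exists_pair_indep:
  assumes S: "S \<subseteq> vecs n" "3 < card S" and u: "u \<in> vecs n" "u \<noteq> vzero n"
  obtains w where "w \<in> S" "pair_indep n u w"
proof -
  have "card {vzero n, u, smul n 2 u} \<le> 3"
    by (simp add: card_insert_if)
  then have "\<not> S \<subseteq> {vzero n, u, smul n 2 u}"
    using S(2) card_mono[of "{vzero n, u, smul n 2 u}" S] by fastforce
  then obtain w where "w \<in> S" "w \<notin> {vzero n, u, smul n 2 u}"
    by blast
  then show ?thesis
    using that pair_indep_if_not_multiple[OF u] S(1) by blast
qed

lemma fibre_subset_vecs: "fibre n u w a b \<subseteq> vecs n"
  unfolding fibre_def by blast

lemma fibre_kernel:
  assumes "x \<in> vecs n" "y \<in> vecs n"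
  shows "(dot n u x, dot n w x) = (dot n u y, dot n w y) \<longleftrightarrow> vdiff n x y \<in> fibre n u w 0 0"
  unfolding fibre_def by (simp add: dot_vdiff_right F3_diff_mod_3_eq_0_iff)

lemma fibre_eq_translate:
  assumes p: "p \<in> fibre n u w a b"
  shows "fibre n u w a b = vadd n p ` fibre n u w 0 0"
proof -
  have "p \<in> vecs n" "dot n u p = a" "dot n w p = b"
    using p unfolding fibre_def by auto
  then have "fibre n u w a b = {x \<in> vecs n. (dot n u x, dot n w x) = (dot n u p, dot n w p)}"
    unfolding fibre_def by auto
  also have "\<dots> = vadd n p ` fibre n u w 0 0"
    by (rule level_set_eq_translate[OF fibre_subset_vecs fibre_kernel \<open>p \<in> vecs n\<close>])
  finally show ?thesis .
qed

lemma smul_in_fibre_iff: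
  "smul n \<zeta> g \<in> fibre n u w a b \<longleftrightarrow> (\<zeta> * dot n u g) mod 3 = a \<and> (\<zeta> * dot n w g) mod 3 = b"
  unfolding fibre_def by (simp add: dot_smul_right)

lemma subspace_fibre_0: "lin_subspace n (fibre n u w 0 0)"
  unfolding lin_subspace_def fibre_def
  by (simp add: dot_vadd_right dot_smul_right)

lemma card_fibre_0:
  assumes "pair_indep n u w"
  shows "9 * card (fibre n u w 0 0) = 3 ^ n"
proof -
  have "(\<lambda>x. (dot n u x, dot n w x)) ` vecs n = F3 \<times> F3"
    using fibre_nonempty[OF assms] unfolding fibre_def by fastforce
  moreover have "card (vecs n) = card ((\<lambda>x. (dot n u x, dot n w x)) ` vecs n) * card (fibre n u w 0 0)"
    by (rule card_vecs_eq_card_image_mult_card_kernel[OF fibre_subset_vecs fibre_kernel])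
  ultimately show ?thesis
    by (simp add: card_cartesian_product)
qed

section \<open>Affine subspaces of codimension two\<close>

lemma affine_sub_iff:
  "affine_sub n d A \<longleftrightarrow>
     (\<exists>p\<in>vecs n. \<exists>v. (\<forall>j<d. v j \<in> vecs n) \<and> lin_indep n d v \<and> A = vadd n p ` lin_span n d v)"
proof -
  have "{vadd n p (lincomb n d c v) | c. c \<in> PiE {..<d} (\<lambda>_. F3)} = vadd n p ` lin_span n d v"
    for p v
    unfolding lin_span_def vecs_def by blast
  then show ?thesis
    unfolding affine_sub_def by simp
qed

lemma card_affine_sub:
  assumes "affine_sub n d A"
  shows "card A = 3 ^ d"
proof -
  obtain p v where li: "lin_indep n d v" and A: "A = vadd n p ` lin_span n d v"
    using assms unfolding affine_sub_iff by blast
  show ?thesis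
    unfolding A using inj_on_vadd[OF lin_span_subset_vecs]
    by (simp add: card_image card_lin_span[OF li])
qed

lemma affine_sub_nonempty: "affine_sub n d A \<Longrightarrow> A \<noteq> {}"
  using card_affine_sub by fastforce

lemma affine_sub_subset_vecs: "affine_sub n d A \<Longrightarrow> A \<subseteq> vecs n"
  unfolding affine_sub_iff by auto

lemma fibre_affine_sub:
  assumes indep: "pair_indep n u w" and n: "2 \<le> n" and ab: "a \<in> F3" "b \<in> F3"
  shows "affine_sub n (n - 2) (fibre n u w a b)"
proof -
  have "card (fibre n u w 0 0) = 3 ^ (n - 2)"
    using card_fibre_0[OF indep] n by (simp add: power_diff)
  then obtain v where v: "\<forall>j<n-2. v j \<in> vecs n" "lin_indep n (n - 2) v"
    and span: "fibre n u w 0 0 = lin_span n (n - 2) v"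
    using exists_basis[OF subspace_fibre_0] by blast
  obtain p where p: "p \<in> fibre n u w a b"
    using fibre_nonempty[OF indep ab] by blast
  then have "fibre n u w a b = vadd n p ` lin_span n (n - 2) v"
    using fibre_eq_translate[OF p] span by simp
  then show ?thesis
    unfolding affine_sub_iff using p v fibre_subset_vecs by blast
qed

lemma card_annihilator:
  assumes v: "\<forall>j<m. v j \<in> vecs n" and n: "n = m + 2"
  shows "9 \<le> card {x \<in> vecs n. \<forall>j<m. dot n (v j) x = 0}"
proof -
  define W where "W = {x \<in> vecs n. \<forall>j<m. dot n (v j) x = 0}"
  define f where "f x = restrict (\<lambda>j. dot n (v j) x) {..<m}" for x
  have kernel: "f x = f y \<longleftrightarrow> vdiff n x y \<in> W" if "x \<in> vecs n" "y \<in> vecs n" for x y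
  proof -
    have "f x = f y \<longleftrightarrow> (\<forall>j<m. dot n (v j) x = dot n (v j) y)"
      unfolding f_def by (auto simp: fun_eq_iff)
    then show ?thesis
      unfolding W_def by (simp add: dot_vdiff_right F3_diff_mod_3_eq_0_iff)
  qed
  have "f ` vecs n \<subseteq> vecs m"
    unfolding f_def by (auto intro: restrict_in_vecs)
  then have "card (f ` vecs n) \<le> 3 ^ m"
    using card_mono[OF finite_vecs] by fastforce
  then have "card (f ` vecs n) * card W \<le> 3 ^ m * card W"
    by (rule mult_le_mono1)
  moreover have "card (vecs n) = card (f ` vecs n) * card W"
    by (rule card_vecs_eq_card_image_mult_card_kernel[OF _ kernel]) (simp add: W_def)
  moreover have "card (vecs n) = 3 ^ m * 9"
    using n by (simp add: power_add)
  ultimately have "3 ^ m * 9 \<le> 3 ^ m * card W"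
    by linarith
  then show ?thesis
    unfolding W_def by simp
qed

lemma affine_sub_eq_fibre:
  assumes n: "2 \<le> n" and A: "affine_sub n (n - 2) A"
  obtains u w a b where "pair_indep n u w" "a \<in> F3" "b \<in> F3" "A = fibre n u w a b"
proof -
  obtain p v where p: "p \<in> vecs n" and v: "\<forall>j<n-2. v j \<in> vecs n"
    and A_eq: "A = vadd n p ` lin_span n (n - 2) v"
    using A unfolding affine_sub_iff by blast
  \<comment> \<open>Two independent u, w vanishing on the direction space of A put A inside one of their
    level sets, which has the same cardinality as A.\<close>
  define W where "W = {x \<in> vecs n. \<forall>j<n-2. dot n (v j) x = 0}"
  have "n = (n - 2) + 2"
    using n by simp
  then have "9 \<le> card W"
    unfolding W_def by (rule card_annihilator[OF v])
  then have W: "W \<subseteq> vecs n" "3 < card W"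
    unfolding W_def by auto
  have "\<not> W \<subseteq> {vzero n}"
    using W(2) card_mono[of "{vzero n}" W] by fastforce
  then obtain u where u: "u \<in> W" "u \<noteq> vzero n"
    by blast
  obtain w where w: "w \<in> W" "pair_indep n u w"
    using exists_pair_indep[OF W] u W(1) by blast
  define a where "a = dot n u p"
  define b where "b = dot n w p"
  have p_fibre: "p \<in> fibre n u w a b"
    using p unfolding fibre_def a_def b_def by simp
  have "v j \<in> fibre n u w 0 0" if "j < n - 2" for j
    using u(1) w(1) v that unfolding W_def fibre_def by (simp add: dot_commute)
  then have "lin_span n (n - 2) v \<subseteq> fibre n u w 0 0"
    by (intro lin_span_subset_subspace[OF subspace_fibre_0]) simp
  then have "A \<subseteq> fibre n u w a b"
    unfolding A_eq fibre_eq_translate[OF p_fibre] by blast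
  moreover have "card A = card (fibre n u w a b)"
    using card_affine_sub[OF A] card_affine_sub[OF fibre_affine_sub[OF w(2) n]]
    unfolding a_def b_def by simp
  ultimately have "A = fibre n u w a b"
    using card_subset_eq[OF finite_subset[OF fibre_subset_vecs finite_vecs]] by blast
  moreover have "a \<in> F3" "b \<in> F3"
    unfolding a_def b_def by simp_all
  ultimately show ?thesis
    using that w(2) by blast
qed

section \<open>Trifferent codes and their columns\<close>

definition trifferent_columns :: "nat \<Rightarrow> (nat \<Rightarrow> int) set \<Rightarrow> bool" where
  "trifferent_columns k G \<longleftrightarrow> (\<forall>x\<in>vecs k. \<forall>y\<in>vecs k. \<forall>z\<in>vecs k. x \<noteq> y \<and> y \<noteq> z \<and> x \<noteq> z \<longrightarrow>
     (\<exists>g\<in>G. {dot k x g, dot k y g, dot k z g} = F3))"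

definition encode :: "nat \<Rightarrow> nat \<Rightarrow> (nat \<Rightarrow> nat \<Rightarrow> int) \<Rightarrow> (nat \<Rightarrow> int) \<Rightarrow> nat \<Rightarrow> int" where
  "encode k n g x = restrict (\<lambda>i. dot k x (g i)) {..<n}"

lemma finite_T_L_set: "finite {card C | C. lin_subspace n C \<and> trifferent n C}"
  by (rule finite_subset[of _ "card ` Pow (vecs n)"]) (auto dest: subspace_subset_vecs)

lemma card_le_T_L: "lin_subspace n C \<Longrightarrow> trifferent n C \<Longrightarrow> card C \<le> T_L n"
  unfolding T_L_def by (rule Max_ge[OF finite_T_L_set]) blast

lemma T_L_attained: obtains C where "lin_subspace n C" "trifferent n C" "card C = T_L n"
proof -
  have "lin_subspace n {vzero n}"
    unfolding lin_subspace_def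
    by (auto intro: vecs_eqI[OF _ vadd_in_vecs vzero_in_vecs] vecs_eqI[OF _ smul_in_vecs vzero_in_vecs])
  moreover have "trifferent n {vzero n}"
    unfolding trifferent_def by simp
  ultimately have "{card C | C. lin_subspace n C \<and> trifferent n C} \<noteq> {}"
    by blast
  then have "T_L n \<in> {card C | C. lin_subspace n C \<and> trifferent n C}"
    unfolding T_L_def by (rule Max_in[OF finite_T_L_set])
  then obtain C where "lin_subspace n C" "trifferent n C" "T_L n = card C"
    by auto
  then show ?thesis
    using that by simp
qed

lemma encode_in_vecs [simp]: "encode k n g x \<in> vecs n"
  unfolding encode_def by (rule restrict_in_vecs) simp

lemma encode_apply: "i < n \<Longrightarrow> encode k n g x i = dot k x (g i)"
  unfolding encode_def by simp

lemma subspace_encode_image: "lin_subspace n (encode k n g ` vecs k)"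
proof -
  have "vzero n = encode k n g (vzero k)"
    by (rule vecs_eqI[of n]) (simp_all add: encode_apply)
  moreover have "vadd n (encode k n g x) (encode k n g y) = encode k n g (vadd k x y)" for x y
    by (rule vecs_eqI[of n]) (simp_all add: encode_apply dot_vadd_left)
  moreover have "smul n c (encode k n g x) = encode k n g (smul k c x)" for c x
    by (rule vecs_eqI[of n]) (simp_all add: encode_apply dot_smul_left)
  ultimately show ?thesis
    unfolding lin_subspace_def by auto
qed

lemma exists_vec_notin_pair:
  assumes "0 < k"
  obtains z where "z \<in> vecs k" "z \<noteq> x" "z \<noteq> y"
proof -
  have "card {x, y} \<le> 2"
    by (simp add: card_insert_if)
  moreover have "(3::nat) \<le> 3 ^ k"
    using assms by (cases k) simp_all
  ultimately have "card {x, y} < card (vecs k)"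
    by simp
  then have "\<not> vecs k \<subseteq> {x, y}"
    using card_mono[of "{x, y}" "vecs k"] by fastforce
  then show ?thesis
    using that by blast
qed

lemma T_L_ge_if_separating_columns:
  assumes k: "0 < k"
    and sep: "\<And>x y z. x \<in> vecs k \<Longrightarrow> y \<in> vecs k \<Longrightarrow> z \<in> vecs k \<Longrightarrow> x \<noteq> y \<Longrightarrow> y \<noteq> z \<Longrightarrow> x \<noteq> z \<Longrightarrow>
      \<exists>i<n. {dot k x (g i), dot k y (g i), dot k z (g i)} = F3"
  shows "3 ^ k \<le> T_L n"
proof -
  let ?C = "encode k n g ` vecs k"
  have "trifferent n ?C"
    unfolding trifferent_def
  proof (clarify)
    fix x y z assume xyz: "x \<in> vecs k" "y \<in> vecs k" "z \<in> vecs k"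
      and distinct: "encode k n g x \<noteq> encode k n g y" "encode k n g y \<noteq> encode k n g z"
        "encode k n g x \<noteq> encode k n g z"
    then obtain i where i: "i < n" "{dot k x (g i), dot k y (g i), dot k z (g i)} = F3"
      using sep by metis
    then show "\<exists>i<n. {encode k n g x i, encode k n g y i, encode k n g z i} = F3"
      by (intro exI[of _ i]) (simp add: encode_apply)
  qed
  moreover have "inj_on (encode k n g) (vecs k)"
  proof (rule inj_onI, rule ccontr)
    fix x y assume x: "x \<in> vecs k" and y: "y \<in> vecs k"
      and eq: "encode k n g x = encode k n g y" and "x \<noteq> y"
    obtain z where z: "z \<in> vecs k" "z \<noteq> x" "z \<noteq> y"
      using exists_vec_notin_pair[OF k] by blast
    obtain i where i: "i < n" "{dot k x (g i), dot k y (g i), dot k z (g i)} = F3"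
      using sep[OF x y z(1) \<open>x \<noteq> y\<close>] z by metis
    have "dot k x (g i) \<noteq> dot k y (g i)"
      using i(2) F3_eq_insert_iff[OF dot_in_F3 dot_in_F3 dot_in_F3] by simp
    moreover have "dot k x (g i) = dot k y (g i)"
      using fun_cong[OF eq, of i] i(1) by (simp add: encode_apply)
    ultimately show False
      by contradiction
  qed
  then have "card ?C = 3 ^ k"
    by (simp add: card_image)
  ultimately show ?thesis
    using card_le_T_L[OF subspace_encode_image] by metis
qed

lemma trifferent_columns_nonempty:
  assumes "0 < k" "trifferent_columns k G"
  shows "G \<noteq> {}"
proof -
  obtain y where y: "y \<in> vecs k" "y \<noteq> vzero k"
    using exists_vec_notin_pair[OF assms(1)] by metis
  obtain z where z: "z \<in> vecs k" "z \<noteq> vzero k" "z \<noteq> y"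
    using exists_vec_notin_pair[OF assms(1)] by metis
  show ?thesis
    using assms(2)[unfolded trifferent_columns_def, rule_format, OF vzero_in_vecs y(1) z(1)] y(2) z(2,3)
    by auto
qed

lemma T_L_ge_if_trifferent_columns:
  assumes k: "0 < k" and G: "G \<subseteq> vecs k" "card G \<le> n" "trifferent_columns k G"
  shows "3 ^ k \<le> T_L n"
proof -
  obtain f where f: "bij_betw f {0..<card G} G"
    using ex_bij_betw_nat_finite[OF finite_subset[OF G(1) finite_vecs]] by blast
  have "0 < card G"
    using trifferent_columns_nonempty[OF k G(3)] finite_subset[OF G(1) finite_vecs] by auto
  define g where "g i = f (if i < card G then i else 0)" for i
  have hit: "\<exists>i<n. g i = c" if c: "c \<in> G" for c
  proof -
    have "c \<in> f ` {0..<card G}"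
      using f c unfolding bij_betw_def by simp
    then obtain i where "i < card G" "f i = c"
      by auto
    then show ?thesis
      using G(2) unfolding g_def by (intro exI[of _ i]) simp
  qed
  show ?thesis
  proof (rule T_L_ge_if_separating_columns[OF k])
    fix x y z assume "x \<in> vecs k" "y \<in> vecs k" "z \<in> vecs k" "x \<noteq> y" "y \<noteq> z" "x \<noteq> z"
    then obtain c where "c \<in> G" "{dot k x c, dot k y c, dot k z c} = F3"
      using G(3) unfolding trifferent_columns_def by blast
    then show "\<exists>i<n. {dot k x (g i), dot k y (g i), dot k z (g i)} = F3"
      using hit by blast
  qed
qed

lemma trifferent_columns_if_T_L_ge:
  assumes "3 ^ k \<le> T_L n"
  obtains G where "G \<subseteq> vecs k" "card G \<le> n" "trifferent_columns k G"
proof -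
  obtain C where C: "lin_subspace n C" "trifferent n C" "card C = T_L n"
    using T_L_attained by blast
  obtain c where cC: "\<forall>j<k. c j \<in> C" and li: "lin_indep n k c"
    using exists_lin_indep_in_subspace[OF C(1)] assms C(3) by metis
  \<comment> \<open>The columns of the generator matrix whose rows are the c j.\<close>
  define g where "g i = restrict (\<lambda>j. c j i) {..<k}" for i
  have "g i \<in> vecs k" if "i < n" for i
    unfolding g_def using cC C(1) that by (auto intro!: restrict_in_vecs vecs_component dest: subspace_subset_vecs)
  then have "g ` {..<n} \<subseteq> vecs k"
    by blast
  moreover have "card (g ` {..<n}) \<le> n"
    using card_image_le[of "{..<n}" g] by simp
  moreover have "trifferent_columns k (g ` {..<n})"
    unfolding trifferent_columns_def
  proof (clarify)
    have enc: "lincomb n k v c = encode k n g v" for v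
      unfolding lincomb_eq encode_def dot_def g_def
      by (intro restrict_ext arg_cong[where f="\<lambda>s. s mod 3"] sum.cong) auto
    have in_C: "encode k n g v \<in> C" if "v \<in> vecs k" for v
      using lincomb_in_subspace[OF C(1) cC] vecs_component[OF that] enc by simp
    fix x y z assume xyz: "x \<in> vecs k" "y \<in> vecs k" "z \<in> vecs k" "x \<noteq> y" "y \<noteq> z" "x \<noteq> z"
    have "encode k n g x \<noteq> encode k n g y \<and> encode k n g y \<noteq> encode k n g z \<and>
        encode k n g x \<noteq> encode k n g z"
      using inj_on_lincomb[OF li] xyz unfolding enc inj_on_def by metis
    then obtain i where "i < n" "{encode k n g x i, encode k n g y i, encode k n g z i} = F3"
      using C(2) in_C[OF xyz(1)] in_C[OF xyz(2)] in_C[OF xyz(3)] unfolding trifferent_def by blast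
    then show "\<exists>h\<in>g ` {..<n}. {dot k x h, dot k y h, dot k z h} = F3"
      by (intro bexI[of _ "g i"]) (simp_all add: encode_apply)
  qed
  ultimately show ?thesis
    using that by blast
qed

lemma trifferent_columns_dim_1: "trifferent_columns 1 {restrict (\<lambda>_. 1) {..<1}}"
  unfolding trifferent_columns_def
proof (intro ballI impI, elim conjE)
  fix x y z assume xyz: "x \<in> vecs 1" "y \<in> vecs 1" "z \<in> vecs 1" "x \<noteq> y" "y \<noteq> z" "x \<noteq> z"
  have dot_e: "dot 1 v (restrict (\<lambda>_. 1) {..<1}) = v 0" if "v \<in> vecs 1" for v
    using vecs_component[OF that, of 0] unfolding dot_def by simp
  have "v 0 \<noteq> v' 0" if "v \<in> vecs 1" "v' \<in> vecs 1" "v \<noteq> v'" for v v'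
    using vecs_eqI[of 1 v v'] that by auto
  then have "{x 0, y 0, z 0} = F3"
    using xyz vecs_component[of _ 1 0] by (simp add: F3_eq_insert_iff)
  then show "\<exists>g\<in>{restrict (\<lambda>_. 1) {..<1}}. {dot 1 x g, dot 1 y g, dot 1 z g} = F3"
    using dot_e xyz by simp
qed

lemma T_L_ge_iff_trifferent_columns:
  assumes "0 < k"
  shows "3 ^ k \<le> T_L n \<longleftrightarrow> (\<exists>G\<subseteq>vecs k. card G \<le> n \<and> trifferent_columns k G)"
  using T_L_ge_if_trifferent_columns[OF assms] trifferent_columns_if_T_L_ge by metis

lemma three_le_T_L:
  assumes "0 < n"
  shows "3 \<le> T_L n"
proof -
  have "{restrict (\<lambda>_. 1) {..<1}} \<subseteq> vecs 1"
    using restrict_in_vecs F3_elements by simp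
  then show ?thesis
    using T_L_ge_iff_trifferent_columns[of 1 n] trifferent_columns_dim_1 assms by fastforce
qed

section \<open>Blocking sets\<close>

lemma finite_b3'_set: "finite {card B | B. B \<subseteq> vecs k \<and> blocking2 k (\<Union>\<zeta>\<in>F3. smul k \<zeta> ` B)}"
  by (rule finite_subset[of _ "card ` Pow (vecs k)"]) auto

lemma b3'_le_iff:
  "b3' k \<le> n \<longleftrightarrow> (\<exists>B\<subseteq>vecs k. card B \<le> n \<and> blocking2 k (\<Union>\<zeta>\<in>F3. smul k \<zeta> ` B))"
proof -
  have "vecs k \<subseteq> (\<Union>\<zeta>\<in>F3. smul k \<zeta> ` vecs k)"
    using smul_1 by (force simp: F3_def)
  then have "blocking2 k (\<Union>\<zeta>\<in>F3. smul k \<zeta> ` vecs k)"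
    unfolding blocking2_def
    using affine_sub_nonempty affine_sub_subset_vecs by fastforce
  then have "{card B | B. B \<subseteq> vecs k \<and> blocking2 k (\<Union>\<zeta>\<in>F3. smul k \<zeta> ` B)} \<noteq> {}"
    by blast
  then have "b3' k \<in> {card B | B. B \<subseteq> vecs k \<and> blocking2 k (\<Union>\<zeta>\<in>F3. smul k \<zeta> ` B)}"
    unfolding b3'_def by (rule Min_in[OF finite_b3'_set])
  then obtain B0 where B0: "B0 \<subseteq> vecs k" "blocking2 k (\<Union>\<zeta>\<in>F3. smul k \<zeta> ` B0)" "card B0 = b3' k"
    by auto
  have b3'_le: "b3' k \<le> card B" if "B \<subseteq> vecs k" "blocking2 k (\<Union>\<zeta>\<in>F3. smul k \<zeta> ` B)" for B
    unfolding b3'_def by (rule Min_le[OF finite_b3'_set]) (use that in auto)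
  show ?thesis
  proof
    assume "b3' k \<le> n"
    then show "\<exists>B\<subseteq>vecs k. card B \<le> n \<and> blocking2 k (\<Union>\<zeta>\<in>F3. smul k \<zeta> ` B)"
      using B0 by auto
  next
    assume "\<exists>B\<subseteq>vecs k. card B \<le> n \<and> blocking2 k (\<Union>\<zeta>\<in>F3. smul k \<zeta> ` B)"
    then show "b3' k \<le> n"
      using b3'_le le_trans by blast
  qed
qed

definition hits_fibres :: "nat \<Rightarrow> (nat \<Rightarrow> int) set \<Rightarrow> bool" where
  "hits_fibres k G \<longleftrightarrow> (\<forall>u w a b. pair_indep k u w \<and> a \<in> F3 \<and> b \<in> F3 \<longrightarrow>
     (\<exists>g\<in>G. \<exists>\<zeta>\<in>F3. smul k \<zeta> g \<in> fibre k u w a b))"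

lemma blocking2_iff_hits_fibres:
  assumes k: "2 \<le> k"
  shows "blocking2 k (\<Union>\<zeta>\<in>F3. smul k \<zeta> ` G) \<longleftrightarrow> hits_fibres k G"
proof -
  have hit_iff: "(\<Union>\<zeta>\<in>F3. smul k \<zeta> ` G) \<inter> A \<noteq> {} \<longleftrightarrow> (\<exists>g\<in>G. \<exists>\<zeta>\<in>F3. smul k \<zeta> g \<in> A)" for A
    by blast
  show ?thesis
  proof
    assume blocking: "blocking2 k (\<Union>\<zeta>\<in>F3. smul k \<zeta> ` G)"
    show "hits_fibres k G"
      unfolding hits_fibres_def
    proof (intro allI impI, elim conjE)
      fix u w a b assume "pair_indep k u w" "a \<in> F3" "b \<in> F3"
      then have "affine_sub k (k - 2) (fibre k u w a b)"
        by (intro fibre_affine_sub k)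
      then show "\<exists>g\<in>G. \<exists>\<zeta>\<in>F3. smul k \<zeta> g \<in> fibre k u w a b"
        using blocking k hit_iff unfolding blocking2_def by blast
    qed
  next
    assume hits: "hits_fibres k G"
    show "blocking2 k (\<Union>\<zeta>\<in>F3. smul k \<zeta> ` G)"
      unfolding blocking2_def
    proof (intro conjI impI allI)
      show "(\<Union>\<zeta>\<in>F3. smul k \<zeta> ` G) \<subseteq> vecs k"
        by auto
      fix A assume "affine_sub k (k - 2) A"
      then obtain u w a b where "pair_indep k u w" "a \<in> F3" "b \<in> F3" "A = fibre k u w a b"
        using affine_sub_eq_fibre[OF k] by metis
      then have "\<exists>g\<in>G. \<exists>\<zeta>\<in>F3. smul k \<zeta> g \<in> A"
        using hits unfolding hits_fibres_def by simp
      then show "(\<Union>\<zeta>\<in>F3. smul k \<zeta> ` G) \<inter> A \<noteq> {}"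
        by (simp only: hit_iff)
    qed
  qed
qed

lemma F3_coeffs_distinct:
  assumes "a \<in> F3" "b \<in> F3" "\<not> (a = 0 \<and> b = 0)"
  shows "\<not> ((a + b) mod 3 = 0 \<and> (b - a) mod 3 = 0)"
    and "\<not> ((b - a) mod 3 = 0 \<and> (- a - b) mod 3 = 0)"
    and "\<not> ((a + b) mod 3 = (b - a) mod 3 \<and> (b - a) mod 3 = (- a - b) mod 3)"
  using F3_cases[OF assms(1)] F3_cases[OF assms(2)] assms(3) by auto

lemma F3_direction_if_separated:
  assumes "a \<in> F3" "b \<in> F3" "\<not> (a = 0 \<and> b = 0)" "X \<in> F3" "Y \<in> F3"
    and "{0, ((a + b) * X + (b - a) * Y) mod 3, ((b - a) * X + (- a - b) * Y) mod 3} = F3"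
  shows "(X = a \<and> Y = b) \<or> ((2 * X) mod 3 = a \<and> (2 * Y) mod 3 = b)"
proof -
  have "0 \<noteq> ((a + b) * X + (b - a) * Y) mod 3" "0 \<noteq> ((b - a) * X + (- a - b) * Y) mod 3"
    "((a + b) * X + (b - a) * Y) mod 3 \<noteq> ((b - a) * X + (- a - b) * Y) mod 3"
    using assms(6) F3_eq_insert_iff[OF F3_elements(1) mod_3_in_F3 mod_3_in_F3] by simp_all
  then show ?thesis
    using F3_cases[OF assms(1)] F3_cases[OF assms(2)] F3_cases[OF assms(4)] F3_cases[OF assms(5)] assms(3)
    by auto
qed

lemma F3_eq_insert_if_differences:
  assumes "P \<in> F3" "Q \<in> F3" "R \<in> F3"
    and "(Q - P) mod 3 \<noteq> 0" "(R - P) mod 3 \<noteq> 0" "(Q - P) mod 3 \<noteq> (R - P) mod 3"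
  shows "{P, Q, R} = F3"
  using assms F3_cases[OF assms(1)] F3_cases[OF assms(2)] F3_cases[OF assms(3)]
  by (auto simp: F3_eq_insert_iff)

lemma separating_column_in_fibre:
  assumes separating: "trifferent_columns k G" and indep: "pair_indep k u w"
    and ab: "a \<in> F3" "b \<in> F3" and nonzero: "\<not> (a = 0 \<and> b = 0)"
  obtains g where "g \<in> G" "smul k 1 g \<in> fibre k u w a b \<or> smul k 2 g \<in> fibre k u w a b"
proof -
  \<comment> \<open>The coefficient pairs of y, z and y - z span the three lines of F_3^2 other than the
    one orthogonal to (a, b). A column g separating 0, y, z is nonzero on all three, so
    (u \<cdot> g, w \<cdot> g) is orthogonal to that line, i.e. it is (a, b) or -(a, b).\<close>
  define y where "y = comb2 k (a + b) u (b - a) w"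
  define z where "z = comb2 k (b - a) u (- a - b) w"
  have "comb2 k l u m w \<noteq> comb2 k l' u m' w"
    if "\<not> (l mod 3 = l' mod 3 \<and> m mod 3 = m' mod 3)" for l m l' m'
    using comb2_eq_imp_coeffs_eq[OF indep] that by blast
  then have "vzero k \<noteq> y" "y \<noteq> z" "vzero k \<noteq> z"
    using F3_coeffs_distinct[OF ab nonzero] unfolding y_def z_def comb2_eq_vzero[of k u w, symmetric]
    by simp_all
  then obtain g where g: "g \<in> G" "{dot k (vzero k) g, dot k y g, dot k z g} = F3"
    using separating[unfolded trifferent_columns_def, rule_format, OF vzero_in_vecs comb2_in_vecs comb2_in_vecs]
    unfolding y_def z_def by blast
  then have "(dot k u g = a \<and> dot k w g = b) \<or> ((2 * dot k u g) mod 3 = a \<and> (2 * dot k w g) mod 3 = b)"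
    by (intro F3_direction_if_separated[OF ab nonzero dot_in_F3 dot_in_F3])
      (simp add: y_def z_def dot_comb2_left)
  then show ?thesis
    using that g(1) unfolding smul_in_fibre_iff by auto
qed

lemma hits_fibres_if_trifferent_columns:
  assumes k: "0 < k" and separating: "trifferent_columns k G"
  shows "hits_fibres k G"
  unfolding hits_fibres_def
proof (intro allI impI, elim conjE)
  fix u w a b assume indep: "pair_indep k u w" and ab: "a \<in> F3" "b \<in> F3"
  show "\<exists>g\<in>G. \<exists>\<zeta>\<in>F3. smul k \<zeta> g \<in> fibre k u w a b"
  proof (cases "a = 0 \<and> b = 0")
    case True
    obtain g where "g \<in> G"
      using trifferent_columns_nonempty[OF k separating] by blast
    moreover have "smul k 0 g \<in> fibre k u w a b"
      using True by (simp add: smul_in_fibre_iff)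
    ultimately show ?thesis
      using F3_elements by blast
  next
    case False
    then show ?thesis
      using separating_column_in_fibre[OF separating indep ab] F3_elements by metis
  qed
qed

lemma hits_fibres_separating_column:
  assumes k: "2 \<le> k" and hits: "hits_fibres k G"
    and u: "u \<in> vecs k" "u \<noteq> vzero k" and w: "w \<in> vecs k" "w \<notin> {vzero k, u}"
  obtains g where "g \<in> G" "dot k u g \<noteq> 0" "dot k w g \<noteq> 0" "dot k u g \<noteq> dot k w g"
proof -
  have hit: "\<exists>g\<in>G. \<exists>\<zeta>\<in>F3. (\<zeta> * dot k u g) mod 3 = a \<and> (\<zeta> * dot k w g) mod 3 = b"
    if "pair_indep k u w" "a \<in> F3" "b \<in> F3" for u w a b
    using hits that unfolding hits_fibres_def smul_in_fibre_iff by blast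
  show ?thesis
  proof (cases "pair_indep k u w")
    case True
    then obtain g \<zeta> where g: "g \<in> G" "\<zeta> \<in> F3" "(\<zeta> * dot k u g) mod 3 = 1" "(\<zeta> * dot k w g) mod 3 = 2"
      using hit F3_elements by blast
    then have "dot k u g \<noteq> 0 \<and> dot k w g \<noteq> 0 \<and> dot k u g \<noteq> dot k w g"
      using F3_cases[of \<zeta>] F3_cases[OF dot_in_F3, of k u g] F3_cases[OF dot_in_F3, of k w g] by auto
    then show ?thesis
      using that g(1) by blast
  next
    case False
    then have w_eq: "w = smul k 2 u"
      using pair_indep_if_not_multiple[OF u w(1)] w(2) by blast
    have "3 < card (vecs k)"
      using k power_increasing[of 2 k "3::nat"] by simp
    then obtain e where "pair_indep k u e"
      using exists_pair_indep[OF subset_refl _ u] by blast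
    then obtain g \<zeta> where g: "g \<in> G" "\<zeta> \<in> F3" "(\<zeta> * dot k u g) mod 3 = 1"
      using hit F3_elements by blast
    moreover have "dot k w g = (2 * dot k u g) mod 3"
      unfolding w_eq by (rule dot_smul_left)
    ultimately have "dot k u g \<noteq> 0 \<and> dot k w g \<noteq> 0 \<and> dot k u g \<noteq> dot k w g"
      using F3_cases[of \<zeta>] F3_cases[OF dot_in_F3, of k u g] by auto
    then show ?thesis
      using that g(1) by blast
  qed
qed

lemma trifferent_columns_if_hits_fibres:
  assumes k: "2 \<le> k" and hits: "hits_fibres k G"
  shows "trifferent_columns k G"
  unfolding trifferent_columns_def
proof (intro ballI impI, elim conjE)
  fix x y z assume xyz: "x \<in> vecs k" "y \<in> vecs k" "z \<in> vecs k" "x \<noteq> y" "y \<noteq> z" "x \<noteq> z"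
  have "vdiff k y x \<noteq> vzero k" "vdiff k z x \<notin> {vzero k, vdiff k y x}"
    using xyz vdiff_eq_vzero_iff vdiff_right_cancel by auto
  then obtain g where "g \<in> G" "dot k (vdiff k y x) g \<noteq> 0" "dot k (vdiff k z x) g \<noteq> 0"
    "dot k (vdiff k y x) g \<noteq> dot k (vdiff k z x) g"
    using hits_fibres_separating_column[OF k hits vdiff_in_vecs _ vdiff_in_vecs] by metis
  then show "\<exists>g\<in>G. {dot k x g, dot k y g, dot k z g} = F3"
    unfolding dot_vdiff_left by (intro bexI[of _ g] F3_eq_insert_if_differences dot_in_F3)
qed

lemma b3'_1: "b3' 1 = 0"
proof -
  have "\<exists>B\<subseteq>vecs 1. card B \<le> 0 \<and> blocking2 1 (\<Union>\<zeta>\<in>F3. smul 1 \<zeta> ` B)"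
    by (intro exI[of _ "{}"]) (simp add: blocking2_def)
  then show ?thesis
    using b3'_le_iff[of 1 0] by simp
qed

lemma trifferent_columns_iff_hits_fibres:
  assumes "2 \<le> k"
  shows "trifferent_columns k G \<longleftrightarrow> hits_fibres k G"
  using assms hits_fibres_if_trifferent_columns trifferent_columns_if_hits_fibres by auto

theorem corollary6p3:
  fixes k n :: nat
  assumes "0 < k" and "0 < n"
  shows "3 ^ k \<le> T_L n \<longleftrightarrow> b3' k \<le> n"
proof (cases "k = 1")
  case True
  then show ?thesis
    using three_le_T_L[OF assms(2)] b3'_1 by simp
next
  case False
  then have k: "2 \<le> k"
    using assms(1) by simp
  have "3 ^ k \<le> T_L n \<longleftrightarrow> (\<exists>G\<subseteq>vecs k. card G \<le> n \<and> trifferent_columns k G)"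
    by (rule T_L_ge_iff_trifferent_columns[OF assms(1)])
  also have "\<dots> \<longleftrightarrow> (\<exists>G\<subseteq>vecs k. card G \<le> n \<and> blocking2 k (\<Union>\<zeta>\<in>F3. smul k \<zeta> ` G))"
    by (simp add: trifferent_columns_iff_hits_fibres[OF k] blocking2_iff_hits_fibres[OF k])
  also have "\<dots> \<longleftrightarrow> b3' k \<le> n"
    by (rule b3'_le_iff[symmetric])
  finally show ?thesis .
qed

end
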